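(* Let $P\in\mathfrak N_2$ and let $R$ be a retract of $P$ of width three which is a tower of nice sections. If $S$ is an ordinal summand of $R$ (in its decomposition into nice sections) which is a nice section of width three, then $S=P(k\to\ell)$ for some level indices $k<\ell$ of $P$.
   Context: All posets are finite; $h_P$ is the height; level sets $P(0)=\min P$, $P(k+1)=\min(P\setminus\bigcup_{i\le k}P(i))$; $P(k\to\ell)=\bigcup_{i=k}^\ell P(i)$ as induced subposet; $A<B$ means $a<b$ for all $a\in A,b\in B$. A retract is the image of an idempotent order-preserving self-map. A section is either a 2-element antichain or a poset $P$ of height $h_P\ge1$ with carrier $\{c_{k,j}:k\in[0,h_P],j\in\{0,1,2\}\}$ such that: $c_{0,j}<\dots<c_{h_P,j}$ for each $j$; each $\{c_{k,0},c_{k,1},c_{k,2}\}$ is an antichain; $c_{k,i}<c_{\ell,j}\Rightarrow c_{k,i+1}<c_{\ell,j+1}$ (indices mod 3); and for no $k$ is $P(k)<P(k+1)$ (the latter kind is a section of width three). A section is nice if for all $x<y$: $\{z:z>x\}\not\subseteq\{z:z\ge y\}$ and $\{z:z<y\}\not\subseteq\{z:z\le x\}$. A tower of nice sections is an ordinal sum of nice sections (the decomposition is unique). $\mathfrak N_2$ is the class of nice sections of width three of height $\ge2$ with horizon 2, i.e. $P(k)<P(\ell)$ whenever $\ell\ge k+2$. *)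

theory Defs
  imports Main
begin

text \<open>A finite poset is represented by a carrier set A and a relation le, considered
only on A. All notions below are relative to the carrier, so a subset B of A with the
same relation le is the induced subposet on B.\<close>

definition poset :: "'a set \<Rightarrow> ('a \<Rightarrow> 'a \<Rightarrow> bool) \<Rightarrow> bool" where
  "poset A le \<longleftrightarrow> (\<forall>x\<in>A. le x x) \<and> (\<forall>x\<in>A. \<forall>y\<in>A. le x y \<and> le y x \<longrightarrow> x = y)
     \<and> (\<forall>x\<in>A. \<forall>y\<in>A. \<forall>z\<in>A. le x y \<and> le y z \<longrightarrow> le x z)"

definition lt :: "('a \<Rightarrow> 'a \<Rightarrow> bool) \<Rightarrow> 'a \<Rightarrow> 'a \<Rightarrow> bool" where
  "lt le x y \<longleftrightarrow> le x y \<and> x \<noteq> y"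

definition set_lt :: "('a \<Rightarrow> 'a \<Rightarrow> bool) \<Rightarrow> 'a set \<Rightarrow> 'a set \<Rightarrow> bool" where
  "set_lt le X Y \<longleftrightarrow> (\<forall>x\<in>X. \<forall>y\<in>Y. lt le x y)"

definition antichain :: "('a \<Rightarrow> 'a \<Rightarrow> bool) \<Rightarrow> 'a set \<Rightarrow> bool" where
  "antichain le B \<longleftrightarrow> (\<forall>x\<in>B. \<forall>y\<in>B. \<not> lt le x y)"

definition width :: "'a set \<Rightarrow> ('a \<Rightarrow> 'a \<Rightarrow> bool) \<Rightarrow> nat" where
  "width A le = Max {card B | B. B \<subseteq> A \<and> antichain le B}"

definition minimals :: "'a set \<Rightarrow> ('a \<Rightarrow> 'a \<Rightarrow> bool) \<Rightarrow> 'a set" where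
  "minimals B le = {x \<in> B. \<forall>y\<in>B. le y x \<longrightarrow> y = x}"

text \<open>below A le k = P(0) \<union> ... \<union> P(k-1)\<close>
fun below :: "'a set \<Rightarrow> ('a \<Rightarrow> 'a \<Rightarrow> bool) \<Rightarrow> nat \<Rightarrow> 'a set" where
  "below A le 0 = {}"
| "below A le (Suc k) = below A le k \<union> minimals (A - below A le k) le"

definition lev :: "'a set \<Rightarrow> ('a \<Rightarrow> 'a \<Rightarrow> bool) \<Rightarrow> nat \<Rightarrow> 'a set" where
  "lev A le k = minimals (A - below A le k) le"

definition levs :: "'a set \<Rightarrow> ('a \<Rightarrow> 'a \<Rightarrow> bool) \<Rightarrow> nat \<Rightarrow> nat \<Rightarrow> 'a set" where
  "levs A le k l = (\<Union>i\<in>{k..l}. lev A le i)"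

definition height :: "'a set \<Rightarrow> ('a \<Rightarrow> 'a \<Rightarrow> bool) \<Rightarrow> nat" where
  "height A le = (GREATEST k. lev A le k \<noteq> {})"

definition section3 :: "'a set \<Rightarrow> ('a \<Rightarrow> 'a \<Rightarrow> bool) \<Rightarrow> bool" where
  "section3 A le \<longleftrightarrow> height A le \<ge> 1 \<and>
    (\<exists>c :: nat \<times> nat \<Rightarrow> 'a.
       bij_betw c ({0..height A le} \<times> {0,1,2}) A
     \<and> (\<forall>j<3. \<forall>k<height A le. lt le (c (k,j)) (c (Suc k, j)))
     \<and> (\<forall>k\<le>height A le. antichain le {c (k,0), c (k,1), c (k,2)})
     \<and> (\<forall>k\<le>height A le. \<forall>l\<le>height A le. \<forall>i<3. \<forall>j<3.
          lt le (c (k,i)) (c (l,j)) \<longrightarrow> lt le (c (k,(i+1) mod 3)) (c (l,(j+1) mod 3))))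
   \<and> (\<forall>k<height A le. \<not> set_lt le (lev A le k) (lev A le (Suc k)))"

definition is_section :: "'a set \<Rightarrow> ('a \<Rightarrow> 'a \<Rightarrow> bool) \<Rightarrow> bool" where
  "is_section A le \<longleftrightarrow> (card A = 2 \<and> antichain le A) \<or> section3 A le"

definition nice :: "'a set \<Rightarrow> ('a \<Rightarrow> 'a \<Rightarrow> bool) \<Rightarrow> bool" where
  "nice A le \<longleftrightarrow> (\<forall>x\<in>A. \<forall>y\<in>A. lt le x y \<longrightarrow>
      \<not> ({z\<in>A. lt le x z} \<subseteq> {z\<in>A. le y z}) \<and> \<not> ({z\<in>A. lt le z y} \<subseteq> {z\<in>A. le z x}))"

definition nice_tower_decomp :: "'a set \<Rightarrow> ('a \<Rightarrow> 'a \<Rightarrow> bool) \<Rightarrow> 'a set list \<Rightarrow> bool" where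
  "nice_tower_decomp A le Ss \<longleftrightarrow> A = \<Union>(set Ss)
     \<and> (\<forall>i<length Ss. \<forall>j<length Ss. i < j \<longrightarrow> set_lt le (Ss!i) (Ss!j))
     \<and> (\<forall>S\<in>set Ss. is_section S le \<and> nice S le)"

definition tower_of_nice_sections :: "'a set \<Rightarrow> ('a \<Rightarrow> 'a \<Rightarrow> bool) \<Rightarrow> bool" where
  "tower_of_nice_sections A le \<longleftrightarrow> (\<exists>Ss. nice_tower_decomp A le Ss)"

definition retract :: "'a set \<Rightarrow> ('a \<Rightarrow> 'a \<Rightarrow> bool) \<Rightarrow> 'a set \<Rightarrow> bool" where
  "retract A le R \<longleftrightarrow> (\<exists>f. (\<forall>x\<in>A. f x \<in> A) \<and> (\<forall>x\<in>A. \<forall>y\<in>A. le x y \<longrightarrow> le (f x) (f y))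
     \<and> (\<forall>x\<in>A. f (f x) = f x) \<and> R = f ` A)"

definition N2 :: "'a set \<Rightarrow> ('a \<Rightarrow> 'a \<Rightarrow> bool) \<Rightarrow> bool" where
  "N2 A le \<longleftrightarrow> section3 A le \<and> nice A le \<and> height A le \<ge> 2
     \<and> (\<forall>k l. k + 2 \<le> l \<longrightarrow> set_lt le (lev A le k) (lev A le l))"

end

theory Submission
  imports Defs
begin

text \<open>A width-three section S sitting inside P is rigid. Every element of S lies on some
level of P, comparabilities of S are comparabilities of P (so levels strictly increase along
S-chains), and by horizon 2 any level gap of at least two forces comparability. If a row of S
were spread over two P-levels, or two consecutive rows of S were two P-levels apart, these gaps
together with the cyclic symmetry of S would make two consecutive levels of S completely
comparable, which a section forbids. Hence the rows of S occupy consecutive levels of P, and as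
both have exactly three elements per level, S is a block of consecutive levels of P.\<close>

definition section_coords :: "'a set \<Rightarrow> ('a \<Rightarrow> 'a \<Rightarrow> bool) \<Rightarrow> nat \<Rightarrow> (nat \<times> nat \<Rightarrow> 'a) \<Rightarrow> bool" where
  "section_coords A le h c \<longleftrightarrow> bij_betw c ({0..h} \<times> {0,1,2}) A
     \<and> (\<forall>j<3. \<forall>k<h. lt le (c (k,j)) (c (Suc k, j)))
     \<and> (\<forall>k\<le>h. antichain le {c (k,0), c (k,1), c (k,2)})
     \<and> (\<forall>k\<le>h. \<forall>l\<le>h. \<forall>i<3. \<forall>j<3.
          lt le (c (k,i)) (c (l,j)) \<longrightarrow> lt le (c (k,(i+1) mod 3)) (c (l,(j+1) mod 3)))"

lemma section3_imp_section_coords: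
  "section3 A le \<Longrightarrow> \<exists>c. section_coords A le (height A le) c"
  unfolding section3_def section_coords_def by blast

lemma less_3_cases: "j < (3::nat) \<Longrightarrow> j = 0 \<or> j = 1 \<or> j = 2"
  by (simp add: numeral_3_eq_3 numeral_2_eq_2 less_Suc_eq)

lemma all_less_3: "(\<forall>a<(3::nat). Q a) \<longleftrightarrow> Q 0 \<and> Q 1 \<and> Q 2"
  using less_3_cases by auto

lemma ex_less_3: "(\<exists>a<(3::nat). Q a) \<longleftrightarrow> Q 0 \<or> Q 1 \<or> Q 2"
  using all_less_3[of "\<lambda>a. \<not> Q a"] by auto

text \<open>A split of the columns yields off-diagonal pairs with both differences 1 and 2 mod 3;
their cyclic shifts cover all off-diagonal pairs.\<close>
lemma cyclic_relation_total:
  fixes Q :: "nat \<Rightarrow> nat \<Rightarrow> bool" and H :: "nat \<Rightarrow> bool"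
  assumes "\<forall>a<3. Q a a"
    and "\<forall>a<3. \<forall>b<3. Q a b \<longrightarrow> Q ((a+1) mod 3) ((b+1) mod 3)"
    and "\<forall>a<3. \<forall>b<3. \<not> H a \<and> H b \<longrightarrow> Q a b"
    and "\<exists>a<3. H a" and "\<exists>a<3. \<not> H a"
  shows "\<forall>a<3. \<forall>b<3. Q a b"
proof -
  have mod3: "(0+1) mod 3 = (1::nat)" "(1+1) mod 3 = (2::nat)" "(2+1) mod 3 = (0::nat)"
    by simp_all
  show ?thesis using assms unfolding all_less_3 ex_less_3 mod3 by sat
qed

lemma poset_subset: "poset A le \<Longrightarrow> B \<subseteq> A \<Longrightarrow> poset B le"
  unfolding poset_def by blast

lemma lt_trans_on:
  assumes "poset A le" "x \<in> A" "y \<in> A" "z \<in> A" "lt le x y" "lt le y z"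
  shows "lt le x z"
  using assms unfolding poset_def lt_def by metis

lemma section_coords_mem:
  "section_coords A le h c \<Longrightarrow> k \<le> h \<Longrightarrow> j < 3 \<Longrightarrow> c (k,j) \<in> A"
  unfolding section_coords_def bij_betw_def using less_3_cases by fastforce

lemma section_coords_image:
  "section_coords A le h c \<Longrightarrow> A = c ` ({0..h} \<times> {0,1,2})"
  unfolding section_coords_def bij_betw_def by simp

lemma section_coords_inj:
  "section_coords A le h c \<Longrightarrow> inj_on c ({0..h} \<times> {0,1,2})"
  unfolding section_coords_def bij_betw_def by simp

lemma section_coords_row_antichain:
  "section_coords A le h c \<Longrightarrow> k \<le> h \<Longrightarrow> antichain le {c (k,0), c (k,1), c (k,2)}"
  unfolding section_coords_def by blast

lemma section_coords_step_lt:
  "section_coords A le h c \<Longrightarrow> k < h \<Longrightarrow> j < 3 \<Longrightarrow> lt le (c (k,j)) (c (Suc k,j))"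
  unfolding section_coords_def by blast

lemma section_coords_cyclic:
  "section_coords A le h c \<Longrightarrow> k \<le> h \<Longrightarrow> l \<le> h \<Longrightarrow> i < 3 \<Longrightarrow> j < 3 \<Longrightarrow>
   lt le (c (k,i)) (c (l,j)) \<Longrightarrow> lt le (c (k,(i+1) mod 3)) (c (l,(j+1) mod 3))"
  unfolding section_coords_def by blast

lemma section_coords_row_distinct:
  assumes "section_coords A le h c" "k \<le> h"
  shows "card {c (k,0), c (k,1), c (k,2)} = 3"
proof -
  have "inj_on c ({0..h} \<times> {0,1,2})" using section_coords_inj[OF assms(1)] .
  then have "c (k,0) \<noteq> c (k,1)" "c (k,0) \<noteq> c (k,2)" "c (k,1) \<noteq> c (k,2)"
    using assms(2) by (auto dest: inj_onD)
  then show ?thesis by simp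
qed

lemma section_coords_chain_lt:
  assumes "poset A le" "section_coords A le h c" "j < 3" "k < l" "l \<le> h"
  shows "lt le (c (k,j)) (c (l,j))"
  using assms(4,5)
proof (induction l)
  case 0
  then show ?case by simp
next
  case (Suc l)
  have step: "lt le (c (l,j)) (c (Suc l,j))"
    using section_coords_step_lt[OF assms(2) _ assms(3)] Suc.prems by simp
  show ?case
  proof (cases "k < l")
    case True
    with Suc have "lt le (c (k,j)) (c (l,j))" by simp
    moreover have "c (k,j) \<in> A" "c (l,j) \<in> A" "c (Suc l,j) \<in> A"
      using section_coords_mem[OF assms(2) _ assms(3)] True Suc.prems by simp_all
    ultimately show ?thesis using lt_trans_on[OF assms(1)] step by blast
  next
    case False
    with Suc.prems have "k = l" by simp
    with step show ?thesis by simp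
  qed
qed

lemma section_coords_lt_imp_less:
  assumes "poset A le" "section_coords A le h c" "a \<le> h" "b \<le> h" "j < 3" "j' < 3"
    and lt: "lt le (c (a,j)) (c (b,j'))"
  shows "a < b"
proof (rule ccontr)
  assume "\<not> a < b"
  then have "b \<le> a" by simp
  have row: "c (b,i) \<in> {c (b,0), c (b,1), c (b,2)}" if "i < 3" for i
    using less_3_cases[OF that] by auto
  have "lt le (c (b,j)) (c (b,j'))"
  proof (cases "b = a")
    case True
    with lt show ?thesis by simp
  next
    case False
    with \<open>b \<le> a\<close> have "lt le (c (b,j)) (c (a,j))"
      using section_coords_chain_lt[OF assms(1,2,5) _ assms(3)] by simp
    with lt show ?thesis
      using lt_trans_on[OF assms(1)] section_coords_mem[OF assms(2)] assms(3-6) by blast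
  qed
  then show False
    using section_coords_row_antichain[OF assms(2,4)] row assms(5,6) unfolding antichain_def by blast
qed

lemma minimals_section_coords_tail:
  assumes "poset A le" "section_coords A le h c" "i \<le> h"
  shows "minimals (c ` ({i..h} \<times> {0,1,2})) le = c ` ({i} \<times> {0,1,2})"
proof
  show "minimals (c ` ({i..h} \<times> {0,1,2})) le \<subseteq> c ` ({i} \<times> {0,1,2})"
  proof
    fix x assume x: "x \<in> minimals (c ` ({i..h} \<times> {0,1,2})) le"
    then obtain a j where aj: "a \<in> {i..h}" "j \<in> {0,1,2::nat}" "x = c (a,j)"
      unfolding minimals_def by blast
    have "a = i"
    proof (rule ccontr)
      assume "a \<noteq> i"
      with aj have "lt le (c (i,j)) x"
        using section_coords_chain_lt[OF assms(1,2)] by auto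
      moreover have "c (i,j) \<in> c ` ({i..h} \<times> {0,1,2})" using aj assms(3) by auto
      ultimately show False using x unfolding minimals_def lt_def by blast
    qed
    with aj show "x \<in> c ` ({i} \<times> {0,1,2})" by blast
  qed
next
  show "c ` ({i} \<times> {0,1,2}) \<subseteq> minimals (c ` ({i..h} \<times> {0,1,2})) le"
  proof
    fix x assume "x \<in> c ` ({i} \<times> {0,1,2})"
    then obtain j where j: "j \<in> {0,1,2::nat}" "x = c (i,j)" by blast
    have "y = x" if y: "y \<in> c ` ({i..h} \<times> {0,1,2})" "le y x" for y
    proof (rule ccontr)
      assume "y \<noteq> x"
      obtain b j' where bj: "b \<in> {i..h}" "j' \<in> {0,1,2::nat}" "y = c (b,j')" using y(1) by blast
      with \<open>y \<noteq> x\<close> y(2) j have "b < i"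
        using section_coords_lt_imp_less[OF assms(1,2), of b i j' j] assms(3)
        unfolding lt_def by auto
      with bj show False by simp
    qed
    with j assms(3) show "x \<in> minimals (c ` ({i..h} \<times> {0,1,2})) le"
      unfolding minimals_def by auto
  qed
qed

lemma diff_below_section_coords:
  assumes "poset A le" "section_coords A le h c" "i \<le> Suc h"
  shows "A - below A le i = c ` ({i..h} \<times> {0,1,2})"
  using assms(3)
proof (induction i)
  case 0
  then show ?case using section_coords_image[OF assms(2)] by simp
next
  case (Suc i)
  then have IH: "A - below A le i = c ` ({i..h} \<times> {0,1,2})" and "i \<le> h" by simp_all
  have "A - below A le (Suc i) = c ` ({i..h} \<times> {0,1,2}) - c ` ({i} \<times> {0,1,2})"
    using IH minimals_section_coords_tail[OF assms(1,2) \<open>i \<le> h\<close>] by auto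
  also have "\<dots> = c ` ({i..h} \<times> {0,1,2} - {i} \<times> {0,1,2})"
    using section_coords_inj[OF assms(2)] \<open>i \<le> h\<close> by (intro inj_on_image_set_diff[symmetric]) auto
  also have "{i..h} \<times> {0,1,2::nat} - {i} \<times> {0,1,2} = {Suc i..h} \<times> {0,1,2}" by auto
  finally show ?case .
qed

lemma lev_section_coords:
  assumes "poset A le" "section_coords A le h c" "i \<le> h"
  shows "lev A le i = {c (i,0), c (i,1), c (i,2)}"
  using diff_below_section_coords[OF assms(1,2)] minimals_section_coords_tail[OF assms]
    assms(3) unfolding lev_def by auto

lemma lev_lt_imp_less:
  assumes "poset A le" "section_coords A le h c" "k \<le> h" "l \<le> h"
    and "x \<in> lev A le k" "y \<in> lev A le l" "lt le x y"
  shows "k < l"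
proof -
  have "\<exists>j<3. x = c (k,j)" "\<exists>j'<3. y = c (l,j')"
    using assms(5,6) lev_section_coords[OF assms(1-3)] lev_section_coords[OF assms(1,2,4)]
    unfolding ex_less_3 by auto
  then obtain j j' where "j < 3" "x = c (k,j)" "j' < 3" "y = c (l,j')" by blast
  then show ?thesis using section_coords_lt_imp_less[OF assms(1-4)] assms(7) by blast
qed

locale section_in_horizon2 =
  fixes P :: "'a set" and le :: "'a \<Rightarrow> 'a \<Rightarrow> bool" and hP :: nat and cP :: "nat \<times> nat \<Rightarrow> 'a"
    and S :: "'a set" and m :: nat and d :: "nat \<times> nat \<Rightarrow> 'a"
  assumes poset: "poset P le"
    and P_coords: "section_coords P le hP cP"
    and horizon2: "\<And>k l. k + 2 \<le> l \<Longrightarrow> set_lt le (lev P le k) (lev P le l)"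
    and S_subset: "S \<subseteq> P"
    and S_coords: "section_coords S le m d"
    and m_pos: "1 \<le> m"
    and rows_not_all_lt: "\<And>p. p < m \<Longrightarrow> \<not> (\<forall>a<3. \<forall>b<3. lt le (d (p,a)) (d (Suc p,b)))"
begin

definition lvl :: "'a \<Rightarrow> nat" where
  "lvl x = fst (the_inv_into ({0..hP} \<times> {0,1,2}) cP x)"

lemma lvl_bound_and_lev:
  assumes "x \<in> P"
  shows "lvl x \<le> hP \<and> x \<in> lev P le (lvl x)"
proof -
  define D where "D = {0..hP} \<times> {0,1,2::nat}"
  define q where "q = the_inv_into D cP x"
  have bij: "bij_betw cP D P" using P_coords unfolding section_coords_def D_def by simp
  have "q \<in> D" "cP q = x"
    using bij assms unfolding q_def by (simp_all add: bij_betw_def the_inv_into_into f_the_inv_into_f)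
  moreover have "lvl x = fst q" unfolding lvl_def q_def D_def ..
  ultimately show ?thesis
    using lev_section_coords[OF poset P_coords] unfolding D_def by (cases q) auto
qed

lemma lt_imp_lvl_less: "x \<in> P \<Longrightarrow> y \<in> P \<Longrightarrow> lt le x y \<Longrightarrow> lvl x < lvl y"
  using lev_lt_imp_less[OF poset P_coords] lvl_bound_and_lev by blast

lemma lvl_gap_imp_lt: "x \<in> P \<Longrightarrow> y \<in> P \<Longrightarrow> lvl x + 2 \<le> lvl y \<Longrightarrow> lt le x y"
  using horizon2 lvl_bound_and_lev unfolding set_lt_def by blast

lemma d_mem_P: "i \<le> m \<Longrightarrow> a < 3 \<Longrightarrow> d (i,a) \<in> P"
  using section_coords_mem[OF S_coords] S_subset by blast

lemma d_lt_imp_lvl_less: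
  "i \<le> m \<Longrightarrow> i' \<le> m \<Longrightarrow> a < 3 \<Longrightarrow> b < 3 \<Longrightarrow> lt le (d (i,a)) (d (i',b)) \<Longrightarrow>
   lvl (d (i,a)) < lvl (d (i',b))"
  using lt_imp_lvl_less d_mem_P by blast

lemma lvl_step_less: "i < m \<Longrightarrow> a < 3 \<Longrightarrow> lvl (d (i,a)) < lvl (d (Suc i,a))"
  using d_lt_imp_lvl_less section_coords_step_lt[OF S_coords] by simp

text \<open>Horizon 2 turns the level gaps into comparabilities, and the cyclic symmetry of S then
makes the rows p and Suc p completely comparable.\<close>
lemma no_level_split:
  assumes "p < m" "\<exists>a<3. H a" "\<exists>a<3. \<not> H a"
    and gap: "\<And>a b. a < 3 \<Longrightarrow> b < 3 \<Longrightarrow> \<not> H a \<Longrightarrow> H b \<Longrightarrow> lvl (d (p,a)) + 2 \<le> lvl (d (Suc p,b))"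
  shows False
proof -
  have "\<forall>a<3. \<forall>b<3. lt le (d (p,a)) (d (Suc p,b))"
  proof (rule cyclic_relation_total[where H = H])
    show "\<forall>a<3. lt le (d (p,a)) (d (Suc p,a))"
      using section_coords_step_lt[OF S_coords \<open>p < m\<close>] by blast
    show "\<forall>a<3. \<forall>b<3. lt le (d (p,a)) (d (Suc p,b)) \<longrightarrow> lt le (d (p,(a+1) mod 3)) (d (Suc p,(b+1) mod 3))"
      using section_coords_cyclic[OF S_coords] \<open>p < m\<close> by simp
    show "\<forall>a<3. \<forall>b<3. \<not> H a \<and> H b \<longrightarrow> lt le (d (p,a)) (d (Suc p,b))"
      using lvl_gap_imp_lt d_mem_P gap \<open>p < m\<close> by simp
  qed (use assms(2,3) in auto)
  with rows_not_all_lt \<open>p < m\<close> show False by blast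
qed

lemma row_same_lvl:
  assumes "i \<le> m" "a < 3" "b < 3"
  shows "lvl (d (i,a)) = lvl (d (i,b))"
proof -
  have "\<not> lvl (d (i,a)) < lvl (d (i,b))" if "i \<le> m" "a < 3" "b < 3" for a b
  proof
    assume less: "lvl (d (i,a)) < lvl (d (i,b))"
    \<comment> \<open>The gap of two levels is found below row i, or above it for the last row.\<close>
    define H where "H c \<longleftrightarrow> lvl (d (i,a)) < lvl (d (i,c))" for c
    have split: "\<exists>c<3. H c" "\<exists>c<3. \<not> H c" using that less unfolding H_def by auto
    show False
    proof (cases "i < m")
      case True
      show False
      proof (rule no_level_split[OF True split])
        fix c c' assume "c < 3" "c' < 3" "\<not> H c" "H c'"
        then show "lvl (d (i,c)) + 2 \<le> lvl (d (Suc i,c'))"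
          using lvl_step_less[OF True \<open>c' < 3\<close>] unfolding H_def by simp
      qed
    next
      case False
      with that m_pos have i: "i = Suc (m - 1)" "m - 1 < m" by simp_all
      show False
      proof (rule no_level_split[OF i(2) split])
        fix c c' assume "c < 3" "c' < 3" "\<not> H c" "H c'"
        then show "lvl (d (m - 1,c)) + 2 \<le> lvl (d (Suc (m - 1),c'))"
          using lvl_step_less[OF i(2) \<open>c < 3\<close>] i(1) unfolding H_def by simp
      qed
    qed
  qed
  with assms show ?thesis by (meson not_less_iff_gr_or_eq)
qed

lemma next_row_next_lvl:
  assumes "i < m"
  shows "lvl (d (Suc i,0)) = Suc (lvl (d (i,0)))"
proof (rule ccontr)
  assume "lvl (d (Suc i,0)) \<noteq> Suc (lvl (d (i,0)))"
  with lvl_step_less[OF assms, of 0] have "lvl (d (i,0)) + 2 \<le> lvl (d (Suc i,0))" by simp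
  then have "lvl (d (i,a)) + 2 \<le> lvl (d (Suc i,b))" if "a < 3" "b < 3" for a b
    using row_same_lvl[of i a 0] row_same_lvl[of "Suc i" b 0] that assms by simp
  then have "\<forall>a<3. \<forall>b<3. lt le (d (i,a)) (d (Suc i,b))"
    using lvl_gap_imp_lt d_mem_P assms by simp
  with rows_not_all_lt assms show False by blast
qed

lemma row_lvl: "i \<le> m \<Longrightarrow> a < 3 \<Longrightarrow> lvl (d (i,a)) = lvl (d (0,0)) + i"
proof (induction i arbitrary: a)
  case 0
  then show ?case using row_same_lvl[of 0 a 0] by simp
next
  case (Suc i)
  then show ?case
    using Suc.IH[of 0] row_same_lvl[of "Suc i" a 0] next_row_next_lvl[of i] by simp
qed

lemma row_eq_lev:
  assumes "i \<le> m"
  shows "{d (i,0), d (i,1), d (i,2)} = lev P le (lvl (d (0,0)) + i)"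
proof (rule card_seteq)
  have "lvl (d (0,0)) + i \<le> hP"
    using row_lvl[OF assms, of 0] lvl_bound_and_lev d_mem_P assms by fastforce
  then show "finite (lev P le (lvl (d (0,0)) + i))"
    using lev_section_coords[OF poset P_coords] by simp
  have "\<forall>a<3. d (i,a) \<in> lev P le (lvl (d (0,0)) + i)"
    using lvl_bound_and_lev d_mem_P row_lvl assms by metis
  then show "{d (i,0), d (i,1), d (i,2)} \<subseteq> lev P le (lvl (d (0,0)) + i)"
    unfolding all_less_3 by simp
  have "card {x, y, z} \<le> 3" for x y z :: 'a
    by (simp add: card_insert_if)
  then have "card (lev P le (lvl (d (0,0)) + i)) \<le> 3"
    using lev_section_coords[OF poset P_coords] \<open>lvl (d (0,0)) + i \<le> hP\<close> by simp
  then show "card (lev P le (lvl (d (0,0)) + i)) \<le> card {d (i,0), d (i,1), d (i,2)}"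
    using section_coords_row_distinct[OF S_coords assms] by simp
qed

lemma S_eq_levs:
  "S = levs P le (lvl (d (0,0))) (lvl (d (0,0)) + m) \<and> lvl (d (0,0)) + m \<le> hP"
proof
  define k where "k = lvl (d (0,0))"
  have "S = (\<Union>i\<in>{0..m}. {d (i,0), d (i,1), d (i,2)})"
    using section_coords_image[OF S_coords] by auto
  also have "\<dots> = (\<Union>i\<in>{0..m}. lev P le (k + i))"
    using row_eq_lev unfolding k_def by simp
  also have "\<dots> = (\<Union>t\<in>(+) k ` {0..m}. lev P le t)" by (simp only: image_image)
  also have "(+) k ` {0..m} = {k..k + m}" by simp
  finally show "S = levs P le k (k + m)" unfolding levs_def k_def .
  show "k + m \<le> hP"
    using row_lvl[of m 0] lvl_bound_and_lev d_mem_P unfolding k_def by fastforce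
qed

end

lemma section3_in_N2_eq_levs:
  assumes "poset P le" "N2 P le" "S \<subseteq> P" "section3 S le"
  shows "\<exists>k l. k < l \<and> l \<le> height P le \<and> S = levs P le k l"
proof -
  obtain cP where cP: "section_coords P le (height P le) cP"
    using assms(2) section3_imp_section_coords unfolding N2_def by blast
  obtain d where d: "section_coords S le (height S le) d"
    using assms(4) section3_imp_section_coords by blast
  have poset_S: "poset S le" using poset_subset assms(1,3) .
  have horizon2: "\<And>k l. k + 2 \<le> l \<Longrightarrow> set_lt le (lev P le k) (lev P le l)"
    using assms(2) unfolding N2_def by blast
  have m_pos: "1 \<le> height S le"
    using assms(4) unfolding section3_def by blast
  have rows_not_all_lt: "\<not> (\<forall>a<3. \<forall>b<3. lt le (d (p,a)) (d (Suc p,b)))"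
    if "p < height S le" for p
  proof
    assume "\<forall>a<3. \<forall>b<3. lt le (d (p,a)) (d (Suc p,b))"
    then have "set_lt le (lev S le p) (lev S le (Suc p))"
      using lev_section_coords[OF poset_S d, of p] lev_section_coords[OF poset_S d, of "Suc p"] that
      unfolding set_lt_def all_less_3 by simp
    with assms(4) that show False unfolding section3_def by blast
  qed
  interpret section_in_horizon2 P le "height P le" cP S "height S le" d
    by (rule section_in_horizon2.intro[OF assms(1) cP horizon2 assms(3) d m_pos rows_not_all_lt])
  have "lvl (d (0,0)) < lvl (d (0,0)) + height S le" using m_pos by simp
  with S_eq_levs show ?thesis by blast
qed

theorem corollary5p1:
  fixes P R S :: "'a set" and le :: "'a \<Rightarrow> 'a \<Rightarrow> bool" and Ss :: "'a set list"
  assumes "finite P" and "poset P le" and "N2 P le"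
    and "retract P le R" and "width R le = 3" and "tower_of_nice_sections R le"
    and "nice_tower_decomp R le Ss" and "S \<in> set Ss"
    and "section3 S le" and "nice S le"
  shows "\<exists>k l. k < l \<and> l \<le> height P le \<and> S = levs P le k l"
proof -
  obtain f where "\<forall>x\<in>P. f x \<in> P" "R = f ` P"
    using \<open>retract P le R\<close> unfolding retract_def by blast
  then have "R \<subseteq> P" by blast
  moreover have "R = \<Union>(set Ss)"
    using \<open>nice_tower_decomp R le Ss\<close> unfolding nice_tower_decomp_def by (rule conjunct1)
  with \<open>S \<in> set Ss\<close> have "S \<subseteq> R" by blast
  ultimately have "S \<subseteq> P" by blast
  with \<open>poset P le\<close> \<open>N2 P le\<close> \<open>section3 S le\<close> show ?thesis
    using section3_in_N2_eq_levs by blast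
qed

end
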